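(* Let $(A,I)$ be a perfect prism with Frobenius $\varphi$. Let $x\in A$ be such that $\varphi(x)=x^p(1+py)$ for some $y\in A$. Then \[x=[a]\prod_{i=1}^{\infty}\bigl(1+p\varphi^{-i}(y)\bigr)^{p^{i-1}},\] where $a\in A/p$ is the reduction of $x$ modulo $p$ and $[a]\in A=W(A/p)$ is its Teichmüller lift.
   Context: For a perfect prism $(A,I)$, $A$ is $p$-torsion free and classically $p$-complete with $A/p$ perfect, so $A=W(A/p)$, $\varphi$ is an automorphism, and the infinite product converges $p$-adically. *)

theory Defs
  imports "HOL-Computational_Algebra.Primes"
begin

definition is_ideal :: "'a::comm_ring_1 set \<Rightarrow> bool" where
  "is_ideal I \<longleftrightarrow> 0 \<in> I \<and> (\<forall>x\<in>I. \<forall>y\<in>I. x + y \<in> I) \<and> (\<forall>r. \<forall>x\<in>I. r * x \<in> I)"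

definition ideal_gen :: "'a::comm_ring_1 set \<Rightarrow> 'a set" where
  "ideal_gen S = \<Inter>{K. is_ideal K \<and> S \<subseteq> K}"

definition ideal_mult :: "'a::comm_ring_1 set \<Rightarrow> 'a set \<Rightarrow> 'a set" where
  "ideal_mult I J = ideal_gen {a * b | a b. a \<in> I \<and> b \<in> J}"

primrec ideal_power :: "'a::comm_ring_1 set \<Rightarrow> nat \<Rightarrow> 'a set" where
  "ideal_power J 0 = UNIV"
| "ideal_power J (Suc n) = ideal_mult J (ideal_power J n)"

text \<open>Invertible ideal (= ideal defining an effective Cartier divisor):
  some product I J is principal, generated by a nonzerodivisor.\<close>
definition invertible_ideal :: "'a::comm_ring_1 set \<Rightarrow> bool" where
  "invertible_ideal I \<longleftrightarrow> is_ideal I \<and>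
     (\<exists>J f. is_ideal J \<and> ideal_mult I J = ideal_gen {f} \<and> (\<forall>z. f * z = 0 \<longrightarrow> z = 0))"

definition adic_lim :: "'a::comm_ring_1 set \<Rightarrow> (nat \<Rightarrow> 'a) \<Rightarrow> 'a \<Rightarrow> bool" where
  "adic_lim J u L \<longleftrightarrow> (\<forall>k. \<exists>N. \<forall>n\<ge>N. u n - L \<in> ideal_power J k)"

definition adic_cauchy :: "'a::comm_ring_1 set \<Rightarrow> (nat \<Rightarrow> 'a) \<Rightarrow> bool" where
  "adic_cauchy J u \<longleftrightarrow> (\<forall>k. \<exists>N. \<forall>m\<ge>N. \<forall>n\<ge>N. u m - u n \<in> ideal_power J k)"

definition adically_complete :: "'a::comm_ring_1 set \<Rightarrow> bool" where
  "adically_complete J \<longleftrightarrow> (\<Inter>k. ideal_power J k) = {0} \<and>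
     (\<forall>u. adic_cauchy J u \<longrightarrow> (\<exists>L. adic_lim J u L))"

abbreviation pA :: "nat \<Rightarrow> 'a::comm_ring_1 set" where
  "pA p \<equiv> ideal_gen {of_nat p}"

text \<open>Frobenius lift: a ring endomorphism reducing to x \<mapsto> x^p modulo p
  (for p-torsion free A this is the same as a delta-structure).\<close>
definition frobenius_lift :: "nat \<Rightarrow> ('a::comm_ring_1 \<Rightarrow> 'a) \<Rightarrow> bool" where
  "frobenius_lift p \<phi> \<longleftrightarrow> \<phi> 1 = 1 \<and> (\<forall>x y. \<phi> (x + y) = \<phi> x + \<phi> y) \<and>
     (\<forall>x y. \<phi> (x * y) = \<phi> x * \<phi> y) \<and> (\<forall>x. \<phi> x - x ^ p \<in> pA p)"

definition perfect_prism :: "nat \<Rightarrow> ('a::comm_ring_1 \<Rightarrow> 'a) \<Rightarrow> 'a set \<Rightarrow> bool" where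
  "perfect_prism p \<phi> I \<longleftrightarrow> prime p \<and>
     (\<forall>x::'a. of_nat p * x = 0 \<longrightarrow> x = 0) \<and>
     frobenius_lift p \<phi> \<and> bij \<phi> \<and>
     invertible_ideal I \<and>
     adically_complete (pA p :: 'a set) \<and>
     adically_complete (ideal_gen (pA p \<union> I)) \<and>
     of_nat p \<in> ideal_gen (I \<union> \<phi> ` I)"

text \<open>Teichmueller lift [a] of the reduction a = x mod p, under A = W(A/p):
  [a] is the p-adic limit of b_n^(p^n), for any lifts b_n of a^(1/p^n)
  (i.e. b_n^(p^n) \<equiv> x mod p).\<close>
definition teich :: "nat \<Rightarrow> 'a::comm_ring_1 \<Rightarrow> 'a" where
  "teich p x = (THE t. \<forall>b. (\<forall>n. b n ^ (p ^ n) - x \<in> pA p) \<longrightarrow>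
                       adic_lim (pA p) (\<lambda>n. b n ^ (p ^ n)) t)"

end

theory Submission
  imports Defs
begin

text \<open>Write \<open>\<psi>\<close> for the inverse of \<open>\<phi>\<close>. Applying \<open>\<psi>^(n+1)\<close> to
  \<open>\<phi>(x) = x^p (1 + p y)\<close> gives \<open>\<psi>^n(x) = \<psi>^(n+1)(x)^p (1 + p \<psi>^(n+1)(y))\<close>, and
  telescoping yields \<open>x = \<psi>^n(x)^(p^n) R_n\<close> with \<open>R_n\<close> the \<open>n\<close>-th partial product.
  Since \<open>a \<equiv> b mod p\<close> implies \<open>a^(p^n) \<equiv> b^(p^n) mod p^(n+1)\<close>, the partial products
  converge p-adically. As \<open>\<phi>\<close> lifts Frobenius, \<open>\<psi>^n(x)\<close> is a \<open>p^n\<close>-th root of \<open>x\<close>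
  modulo \<open>p\<close>, and bijectivity of \<open>\<phi>\<close> makes such roots unique modulo \<open>p\<close>; hence
  \<open>\<psi>^n(x)^(p^n)\<close> converges to the Teichmueller lift of \<open>x mod p\<close>, and passing to the
  limit in the factorisation of \<open>x\<close> gives the claim.\<close>

lemma is_ideal_multiples: "is_ideal {z. d dvd z}"
  unfolding is_ideal_def by auto

lemma ideal_gen_eq_multiples:
  fixes d :: "'a::comm_ring_1"
  assumes "d \<in> S" and "\<forall>s\<in>S. d dvd s"
  shows "ideal_gen S = {z. d dvd z}"
proof
  show "ideal_gen S \<subseteq> {z. d dvd z}"
    unfolding ideal_gen_def using is_ideal_multiples[of d] assms(2) by auto
  show "{z. d dvd z} \<subseteq> ideal_gen S"
  proof (clarify elim!: dvdE)
    fix r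
    have "r * d \<in> K" if "is_ideal K" and "S \<subseteq> K" for K
      using that assms(1) unfolding is_ideal_def by auto
    then show "d * r \<in> ideal_gen S"
      unfolding ideal_gen_def by (auto simp: mult.commute)
  qed
qed

lemma pA_eq: "(pA p :: 'a::comm_ring_1 set) = {z. of_nat p dvd z}"
  by (rule ideal_gen_eq_multiples) auto

lemma ideal_power_pA: "ideal_power (pA p :: 'a::comm_ring_1 set) k = {z. of_nat p ^ k dvd z}"
proof (induction k)
  case 0
  then show ?case by auto
next
  case (Suc k)
  let ?P = "{a * b |a b. of_nat p dvd a \<and> (of_nat p :: 'a) ^ k dvd b}"
  have "ideal_power (pA p :: 'a set) (Suc k) = ideal_gen ?P"
    unfolding ideal_power.simps ideal_mult_def Suc by (simp only: pA_eq mem_Collect_eq)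
  also have "\<dots> = {z. of_nat p ^ Suc k dvd z}"
  proof (rule ideal_gen_eq_multiples)
    show "of_nat p ^ Suc k \<in> ?P"
      using power_Suc[of "of_nat p :: 'a" k] dvd_refl by blast
    show "\<forall>s\<in>?P. of_nat p ^ Suc k dvd s"
      by (auto simp: mult_dvd_mono)
  qed
  finally show ?case .
qed

lemma adic_lim_pA_iff:
  "adic_lim (pA p) u (L::'a::comm_ring_1) \<longleftrightarrow> (\<forall>k. \<exists>N. \<forall>n\<ge>N. of_nat p ^ k dvd u n - L)"
  unfolding adic_lim_def ideal_power_pA by simp

lemma adic_cauchy_pA_iff:
  "adic_cauchy (pA p) (u :: nat \<Rightarrow> 'a::comm_ring_1) \<longleftrightarrow>
     (\<forall>k. \<exists>N. \<forall>m\<ge>N. \<forall>n\<ge>N. of_nat p ^ k dvd u m - u n)"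
  unfolding adic_cauchy_def ideal_power_pA by simp

lemma adic_lim_pA_const: "adic_lim (pA p) (\<lambda>n. c) (c::'a::comm_ring_1)"
  unfolding adic_lim_pA_iff by simp

lemma adic_lim_pA_mult:
  fixes L M :: "'a::comm_ring_1"
  assumes "adic_lim (pA p) u L" and "adic_lim (pA p) v M"
  shows "adic_lim (pA p) (\<lambda>n. u n * v n) (L * M)"
  unfolding adic_lim_pA_iff
proof
  fix k
  obtain N1 where N1: "\<forall>n\<ge>N1. of_nat p ^ k dvd u n - L"
    using assms(1) adic_lim_pA_iff by blast
  obtain N2 where N2: "\<forall>n\<ge>N2. of_nat p ^ k dvd v n - M"
    using assms(2) adic_lim_pA_iff by blast
  have "of_nat p ^ k dvd u n * v n - L * M" if "n \<ge> max N1 N2" for n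
  proof -
    have "of_nat p ^ k dvd u n * (v n - M) + (u n - L) * M"
      using N1 N2 that by (intro dvd_add dvd_mult dvd_mult2) auto
    then show ?thesis by (simp add: algebra_simps)
  qed
  then show "\<exists>N. \<forall>n\<ge>N. of_nat p ^ k dvd u n * v n - L * M" by blast
qed

lemma adic_lim_pA_approx:
  fixes L :: "'a::comm_ring_1"
  assumes "adic_lim (pA p) u L" and "\<forall>n. of_nat p ^ Suc n dvd v n - u n"
  shows "adic_lim (pA p) v L"
  unfolding adic_lim_pA_iff
proof
  fix k
  obtain N where N: "\<forall>n\<ge>N. of_nat p ^ k dvd u n - L"
    using assms(1) adic_lim_pA_iff by blast
  have "of_nat p ^ k dvd v n - L" if "n \<ge> max N k" for n
  proof -
    have "(of_nat p :: 'a) ^ k dvd of_nat p ^ Suc n"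
      using that by (intro le_imp_power_dvd) auto
    then have "of_nat p ^ k dvd v n - u n"
      using assms(2) dvd_trans by blast
    then have "of_nat p ^ k dvd (v n - u n) + (u n - L)"
      using N that by (intro dvd_add) auto
    then show ?thesis by simp
  qed
  then show "\<exists>N. \<forall>n\<ge>N. of_nat p ^ k dvd v n - L" by blast
qed

lemma adic_lim_pA_unique:
  fixes L M :: "'a::comm_ring_1"
  assumes "adically_complete (pA p :: 'a set)"
    and "adic_lim (pA p) u L" and "adic_lim (pA p) u M"
  shows "L = M"
proof -
  have "of_nat p ^ k dvd L - M" for k
  proof -
    obtain N1 where "\<forall>n\<ge>N1. of_nat p ^ k dvd u n - L"
      using assms(2) adic_lim_pA_iff by blast
    moreover obtain N2 where "\<forall>n\<ge>N2. of_nat p ^ k dvd u n - M"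
      using assms(3) adic_lim_pA_iff by blast
    ultimately have "of_nat p ^ k dvd (u (max N1 N2) - M) - (u (max N1 N2) - L)"
      by (intro dvd_diff[of _ "u (max N1 N2) - M" "u (max N1 N2) - L"]) auto
    then show ?thesis by simp
  qed
  then have "L - M \<in> (\<Inter>k. ideal_power (pA p) k)"
    by (simp add: ideal_power_pA)
  then have "L - M = 0"
    using assms(1) unfolding adically_complete_def by blast
  then show ?thesis by simp
qed

lemma adic_cauchy_pA_successive:
  assumes "\<forall>n. (of_nat p :: 'a::comm_ring_1) ^ Suc n dvd u (Suc n) - u n"
  shows "adic_cauchy (pA p) u"
  unfolding adic_cauchy_pA_iff
proof
  fix k
  have from_k: "(of_nat p :: 'a) ^ k dvd u m - u k" if "k \<le> m" for m
    using that
  proof (induction m rule: dec_induct)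
    case base
    then show ?case by simp
  next
    case (step m)
    have "(of_nat p :: 'a) ^ k dvd of_nat p ^ Suc m"
      using step.hyps by (intro le_imp_power_dvd) auto
    then have "(of_nat p :: 'a) ^ k dvd u (Suc m) - u m"
      using assms[rule_format, of m] by (rule dvd_trans)
    then have "(of_nat p :: 'a) ^ k dvd (u (Suc m) - u m) + (u m - u k)"
      using step.IH by (rule dvd_add)
    then show ?case by simp
  qed
  have "(of_nat p :: 'a) ^ k dvd u m - u n" if "m \<ge> k" "n \<ge> k" for m n
    using dvd_diff[OF from_k[OF that(1)] from_k[OF that(2)]] by simp
  then show "\<exists>N. \<forall>m\<ge>N. \<forall>n\<ge>N. (of_nat p :: 'a) ^ k dvd u m - u n" by blast
qed

lemma adic_lim_pA_successive:
  assumes "adically_complete (pA p :: 'a::comm_ring_1 set)"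
    and "\<forall>n. (of_nat p :: 'a) ^ Suc n dvd u (Suc n) - u n"
  obtains L where "adic_lim (pA p) u L"
  using adic_cauchy_pA_successive[OF assms(2)] assms(1) that
  unfolding adically_complete_def by blast

lemma dvd_pth_power_diff:
  fixes a b :: "'a::comm_ring_1"
  assumes "of_nat p ^ k dvd a - b" and "of_nat p dvd a - b"
  shows "of_nat p ^ Suc k dvd a ^ p - b ^ p"
proof -
  define S where "S = (\<Sum>i<p. b ^ (p - Suc i) * a ^ i)"
  \<comment> \<open>\<open>a^p - b^p = (a - b) S\<close>, and \<open>S \<equiv> p b^(p-1) \<equiv> 0 mod p\<close>\<close>
  have "of_nat p dvd a ^ i - b ^ i" for i
    using assms(2) power_diff_sumr2[of a i b] by (metis dvd_trans dvd_triv_left)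
  then have "of_nat p dvd (\<Sum>i<p. b ^ (p - Suc i) * (a ^ i - b ^ i))"
    by (intro dvd_sum dvd_mult)
  moreover have "(\<Sum>i<p. b ^ (p - Suc i) * (a ^ i - b ^ i)) = S - of_nat p * b ^ (p - 1)"
  proof -
    have "(\<Sum>i<p. b ^ (p - Suc i) * b ^ i) = (\<Sum>i<p. b ^ (p - 1))"
      by (rule sum.cong) (auto simp: power_add[symmetric])
    then show ?thesis
      by (simp add: S_def right_diff_distrib sum_subtractf)
  qed
  ultimately have "of_nat p dvd S - of_nat p * b ^ (p - 1) + of_nat p * b ^ (p - 1)"
    by (intro dvd_add) auto
  then have "of_nat p dvd S" by simp
  from mult_dvd_mono[OF assms(1) this]
  show ?thesis using power_diff_sumr2[of a p b] by (simp add: S_def mult.commute)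
qed

lemma dvd_iterated_pth_power_diff:
  fixes a b :: "'a::comm_ring_1"
  assumes "of_nat p dvd a - b"
  shows "of_nat p ^ Suc n dvd a ^ (p ^ n) - b ^ (p ^ n)"
proof (induction n)
  case 0
  then show ?case using assms by simp
next
  case (Suc n)
  have p_dvd: "of_nat p dvd a ^ (p ^ n) - b ^ (p ^ n)"
    using Suc.IH by (rule dvd_trans[rotated]) simp
  have "c ^ (p ^ Suc n) = (c ^ (p ^ n)) ^ p" for c :: 'a
    by (simp add: power_mult[symmetric] mult.commute)
  with dvd_pth_power_diff[OF Suc.IH p_dvd] show ?case by simp
qed

definition ring_endomorphism :: "('a::comm_ring_1 \<Rightarrow> 'a) \<Rightarrow> bool" where
  "ring_endomorphism f \<longleftrightarrow>
     f 1 = 1 \<and> (\<forall>x y. f (x + y) = f x + f y) \<and> (\<forall>x y. f (x * y) = f x * f y)"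

lemma ring_endomorphism_0:
  assumes "ring_endomorphism f"
  shows "f 0 = 0"
proof -
  have "f (0 + 0) = f 0 + f 0"
    using assms unfolding ring_endomorphism_def by blast
  then show ?thesis by simp
qed

lemma ring_endomorphism_diff:
  assumes "ring_endomorphism f"
  shows "f (a - b) = f a - f b"
proof -
  have "f (a - b) + f b = f a"
    using assms unfolding ring_endomorphism_def by (metis diff_add_cancel)
  then show ?thesis by (simp add: eq_diff_eq)
qed

lemma ring_endomorphism_of_nat: "ring_endomorphism f \<Longrightarrow> f (of_nat n) = of_nat n"
  by (induction n) (auto simp: ring_endomorphism_def ring_endomorphism_0)

lemma ring_endomorphism_power: "ring_endomorphism f \<Longrightarrow> f (a ^ n) = f a ^ n"
  by (induction n) (auto simp: ring_endomorphism_def)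

lemma ring_endomorphism_funpow: "ring_endomorphism f \<Longrightarrow> ring_endomorphism (f ^^ n)"
  by (induction n) (auto simp: ring_endomorphism_def)

lemma ring_endomorphism_inv:
  assumes "ring_endomorphism f" and "bij f"
  shows "ring_endomorphism (inv f)"
proof -
  have f_inv: "f (inv f z) = z" for z
    using assms(2) by (simp add: bij_is_surj surj_f_inv_f)
  have inv_f: "inv f (f z) = z" for z
    using assms(2) by (simp add: bij_is_inj)
  show ?thesis
    unfolding ring_endomorphism_def
    using assms(1) inv_f[of 1] inv_f[of "inv f _ + inv f _"] inv_f[of "inv f _ * inv f _"]
    by (simp add: ring_endomorphism_def f_inv)
qed

lemma frobenius_lift_ring_endomorphism: "frobenius_lift p \<phi> \<Longrightarrow> ring_endomorphism \<phi>"
  unfolding frobenius_lift_def ring_endomorphism_def by blast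

lemma frobenius_lift_dvd: "frobenius_lift p \<phi> \<Longrightarrow> of_nat p dvd \<phi> z - z ^ p"
  unfolding frobenius_lift_def pA_eq by blast

lemma frobenius_lift_dvd_funpow:
  assumes "frobenius_lift p \<phi>"
  shows "of_nat p dvd (\<phi> ^^ n) z - z ^ (p ^ n)"
proof (induction n)
  case 0
  then show ?case by simp
next
  case (Suc n)
  have \<phi>: "ring_endomorphism \<phi>"
    using assms by (rule frobenius_lift_ring_endomorphism)
  obtain w where "(\<phi> ^^ n) z - z ^ (p ^ n) = of_nat p * w"
    using Suc.IH by (rule dvdE)
  then have "(\<phi> ^^ n) z = z ^ (p ^ n) + of_nat p * w"
    by (simp add: diff_eq_eq)
  then have "(\<phi> ^^ Suc n) z = \<phi> (z ^ (p ^ n)) + of_nat p * \<phi> w"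
    using \<phi> by (simp add: ring_endomorphism_def ring_endomorphism_of_nat)
  moreover have "z ^ (p ^ Suc n) = (z ^ (p ^ n)) ^ p"
    by (simp add: power_mult[symmetric] mult.commute)
  ultimately have "(\<phi> ^^ Suc n) z - z ^ (p ^ Suc n) =
      (\<phi> (z ^ (p ^ n)) - (z ^ (p ^ n)) ^ p) + of_nat p * \<phi> w"
    by simp
  then show ?case
    using frobenius_lift_dvd[OF assms] by simp
qed

lemma frobenius_lift_dvd_root_diff:
  fixes \<phi> :: "'a::comm_ring_1 \<Rightarrow> 'a" and u v :: 'a
  assumes "frobenius_lift p \<phi>" and "bij \<phi>" and "of_nat p dvd u ^ p - v ^ p"
  shows "of_nat p dvd u - v"
proof -
  have \<phi>: "ring_endomorphism \<phi>"
    using assms(1) by (rule frobenius_lift_ring_endomorphism)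
  have "\<phi> (u - v) = (u ^ p - v ^ p) + (\<phi> u - u ^ p) - (\<phi> v - v ^ p)"
    using \<phi> by (simp add: ring_endomorphism_diff)
  moreover have "of_nat p dvd (u ^ p - v ^ p) + (\<phi> u - u ^ p) - (\<phi> v - v ^ p)"
    by (rule dvd_diff[OF dvd_add[OF assms(3)]]) (rule frobenius_lift_dvd[OF assms(1)])+
  ultimately have "of_nat p dvd \<phi> (u - v)"
    by simp
  then obtain w where "\<phi> (u - v) = of_nat p * w"
    by (rule dvdE)
  also have "\<dots> = \<phi> (of_nat p * inv \<phi> w)"
    using \<phi> assms(2) by (simp add: ring_endomorphism_def ring_endomorphism_of_nat
        bij_is_surj surj_f_inv_f)
  finally have "u - v = of_nat p * inv \<phi> w"
    using assms(2) by (simp add: bij_is_inj inj_eq)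
  then show ?thesis by simp
qed

lemma frobenius_lift_dvd_iterated_root_diff:
  fixes \<phi> :: "'a::comm_ring_1 \<Rightarrow> 'a" and u v :: 'a
  assumes "frobenius_lift p \<phi>" and "bij \<phi>" and "of_nat p dvd u ^ (p ^ n) - v ^ (p ^ n)"
  shows "of_nat p dvd u - v"
  using assms(3)
proof (induction n arbitrary: u v)
  case 0
  then show ?case by simp
next
  case (Suc n)
  have "of_nat p dvd u ^ p - v ^ p"
    using Suc.IH[of "u ^ p" "v ^ p"] Suc.prems by (simp add: power_mult)
  then show ?case
    using assms(1,2) frobenius_lift_dvd_root_diff by blast
qed

lemma teich_eq_lim_roots:
  fixes \<phi> :: "'a::comm_ring_1 \<Rightarrow> 'a" and c :: "nat \<Rightarrow> 'a" and x :: 'a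
  assumes "frobenius_lift p \<phi>" and "bij \<phi>" and "adically_complete (pA p :: 'a set)"
    and roots: "\<forall>n. of_nat p dvd c n ^ (p ^ n) - x"
  shows "adic_lim (pA p) (\<lambda>n. c n ^ (p ^ n)) (teich p x)"
proof -
  have close: "of_nat p ^ Suc n dvd b ^ (p ^ n) - c n ^ (p ^ n)"
    if "of_nat p dvd b ^ (p ^ n) - x" for b n
  proof -
    have "of_nat p dvd (b ^ (p ^ n) - x) - (c n ^ (p ^ n) - x)"
      using that roots[rule_format, of n] by (rule dvd_diff)
    then have "of_nat p dvd b ^ (p ^ n) - c n ^ (p ^ n)"
      by simp
    then have "of_nat p dvd b - c n"
      by (rule frobenius_lift_dvd_iterated_root_diff[OF assms(1,2)])
    then show ?thesis
      by (rule dvd_iterated_pth_power_diff)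
  qed
  have "of_nat p ^ Suc n dvd c (Suc n) ^ (p ^ Suc n) - c n ^ (p ^ n)" for n
    using close[of "c (Suc n) ^ p" n] roots[rule_format, of "Suc n"]
    by (simp add: power_mult[symmetric] mult.commute)
  then obtain T where T: "adic_lim (pA p) (\<lambda>n. c n ^ (p ^ n)) T"
    using adic_lim_pA_successive[OF assms(3), of "\<lambda>n. c n ^ (p ^ n)"] by blast
  have "teich p x = T"
    unfolding teich_def
  proof (rule the_equality)
    show "\<forall>b. (\<forall>n. b n ^ p ^ n - x \<in> pA p) \<longrightarrow> adic_lim (pA p) (\<lambda>n. b n ^ p ^ n) T"
      using adic_lim_pA_approx[OF T] close by (simp add: pA_eq)
    fix t
    assume "\<forall>b. (\<forall>n. b n ^ p ^ n - x \<in> pA p) \<longrightarrow> adic_lim (pA p) (\<lambda>n. b n ^ p ^ n) t"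
    then have "adic_lim (pA p) (\<lambda>n. c n ^ p ^ n) t"
      using roots by (simp add: pA_eq)
    then show "t = T"
      using adic_lim_pA_unique[OF assms(3) _ T] by blast
  qed
  with T show ?thesis by simp
qed

lemma teich_eq_lim_inv_frobenius:
  fixes \<phi> :: "'a::comm_ring_1 \<Rightarrow> 'a" and x :: 'a
  assumes "frobenius_lift p \<phi>" and "bij \<phi>" and "adically_complete (pA p :: 'a set)"
  shows "adic_lim (pA p) (\<lambda>n. ((inv \<phi> ^^ n) x) ^ (p ^ n)) (teich p x)"
proof (rule teich_eq_lim_roots[OF assms], intro allI)
  fix n
  have "of_nat p dvd (\<phi> ^^ n) ((inv \<phi> ^^ n) x) - ((inv \<phi> ^^ n) x) ^ (p ^ n)"
    using assms(1) by (rule frobenius_lift_dvd_funpow)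
  then have "of_nat p dvd x - ((inv \<phi> ^^ n) x) ^ (p ^ n)"
    using fn_o_inv_fn_is_id[OF assms(2), of n] by (simp add: fun_eq_iff)
  then show "of_nat p dvd ((inv \<phi> ^^ n) x) ^ (p ^ n) - x"
    by (metis dvd_minus_iff minus_diff_eq)
qed

lemma adic_lim_pA_partial_prod:
  fixes z :: "nat \<Rightarrow> 'a::comm_ring_1"
  assumes "adically_complete (pA p :: 'a set)"
  obtains Q where "adic_lim (pA p) (\<lambda>N. \<Prod>i\<in>{1..N}. (1 + of_nat p * z i) ^ (p ^ (i - 1))) Q"
proof (rule adic_lim_pA_successive[OF assms], intro allI)
  fix n
  let ?R = "\<lambda>N. \<Prod>i\<in>{1..N}. (1 + of_nat p * z i) ^ (p ^ (i - 1))"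
  have "of_nat p ^ Suc n dvd (1 + of_nat p * z (Suc n)) ^ (p ^ n) - 1 ^ (p ^ n)"
    by (rule dvd_iterated_pth_power_diff) simp
  then have "of_nat p ^ Suc n dvd ?R n * ((1 + of_nat p * z (Suc n)) ^ (p ^ n) - 1)"
    by simp
  moreover have "?R (Suc n) - ?R n = ?R n * ((1 + of_nat p * z (Suc n)) ^ (p ^ n) - 1)"
    by (simp add: algebra_simps)
  ultimately show "of_nat p ^ Suc n dvd ?R (Suc n) - ?R n"
    by simp
qed

lemma eq_funpow_power_mult_partial_prod:
  fixes \<psi> :: "'a::comm_ring_1 \<Rightarrow> 'a"
  assumes "ring_endomorphism \<psi>" and "x = \<psi> x ^ p * (1 + of_nat p * \<psi> y)"
  shows "x = ((\<psi> ^^ n) x) ^ (p ^ n) * (\<Prod>i\<in>{1..n}. (1 + of_nat p * (\<psi> ^^ i) y) ^ (p ^ (i - 1)))"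
proof (induction n)
  case 0
  then show ?case by simp
next
  case (Suc n)
  have "(\<psi> ^^ n) x = ((\<psi> ^^ Suc n) x) ^ p * (1 + of_nat p * (\<psi> ^^ Suc n) y)"
    using ring_endomorphism_funpow[OF assms(1), of n]
    by (subst assms(2)) (simp add: ring_endomorphism_def ring_endomorphism_power
        ring_endomorphism_of_nat funpow_swap1)
  then have "((\<psi> ^^ n) x) ^ (p ^ n) =
      ((\<psi> ^^ Suc n) x) ^ (p ^ Suc n) * (1 + of_nat p * (\<psi> ^^ Suc n) y) ^ (p ^ n)"
    by (simp only: power_mult_distrib power_Suc power_mult)
  with Suc.IH show ?case
    by (simp add: ac_simps)
qed

theorem lemma2p12:
  fixes p :: nat and \<phi> :: "'a::comm_ring_1 \<Rightarrow> 'a" and I :: "'a set" and x y :: 'a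
  assumes "perfect_prism p \<phi> I"
    and "\<phi> x = x ^ p * (1 + of_nat p * y)"
  shows "\<exists>Q. adic_lim (pA p)
              (\<lambda>N. \<Prod>i\<in>{1..N}. (1 + of_nat p * ((inv \<phi> ^^ i) y)) ^ (p ^ (i - 1))) Q
           \<and> x = teich p x * Q"
proof -
  have frob: "frobenius_lift p \<phi>" and bij: "bij \<phi>"
    and complete: "adically_complete (pA p :: 'a set)"
    using assms(1) unfolding perfect_prism_def by auto
  define \<psi> where "\<psi> = inv \<phi>"
  let ?R = "\<lambda>N. \<Prod>i\<in>{1..N}. (1 + of_nat p * ((\<psi> ^^ i) y)) ^ (p ^ (i - 1))"
  have \<psi>: "ring_endomorphism \<psi>"
    unfolding \<psi>_def using frob bij by (intro ring_endomorphism_inv frobenius_lift_ring_endomorphism)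
  have "x = \<psi> (\<phi> x)"
    unfolding \<psi>_def using bij by (simp add: bij_is_inj)
  also have "\<dots> = \<psi> x ^ p * (1 + of_nat p * \<psi> y)"
    using \<psi> by (simp add: assms(2) ring_endomorphism_def ring_endomorphism_power
        ring_endomorphism_of_nat)
  finally have factor: "(\<lambda>n. ((\<psi> ^^ n) x) ^ (p ^ n) * ?R n) = (\<lambda>n. x)"
    using eq_funpow_power_mult_partial_prod[OF \<psi>] by (simp add: fun_eq_iff)
  obtain Q where Q: "adic_lim (pA p) ?R Q"
    by (rule adic_lim_pA_partial_prod[OF complete])
  have "adic_lim (pA p) (\<lambda>n. ((\<psi> ^^ n) x) ^ (p ^ n) * ?R n) (teich p x * Q)"
    unfolding \<psi>_def using teich_eq_lim_inv_frobenius[OF frob bij complete] Q[unfolded \<psi>_def]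
    by (rule adic_lim_pA_mult)
  then have "x = teich p x * Q"
    unfolding factor using adic_lim_pA_unique[OF complete adic_lim_pA_const] by blast
  with Q show ?thesis
    unfolding \<psi>_def by blast
qed

end
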